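(* For every $f\in L^1(\mathbb R^3\times\mathbb R^3,\,dx\otimes\sigma(v)\,dv)$ (the gain operator acting in the velocity variable, $x$ being a parameter) one has, for a.e. $(x,v)$, $$Q^+f(x,v)=\frac{1}{2\epsilon^2\gamma^2}\int_{\mathbb R^3} k(v,v')\,f(x,v')\,dv',$$ where $$k(v,v')=\Big(\frac{m_1}{2\pi\vartheta_1}\Big)^{1/2}|v-v'|^{-1}\exp\Big\{-\frac{m_1}{8\vartheta_1}\Big((1+\mu)|v-v'|+\frac{|v-u_1|^2-|v'-u_1|^2}{|v-v'|}\Big)^2\Big\}.$$
   Context: Fix masses $m,m_1>0$, a constant restitution coefficient $\epsilon\in(0,1)$, a bulk velocity $u_1\in\mathbb R^3$ and a temperature $\vartheta_1>0$. Let $\mathcal M_1(v)=\big(\frac{m_1}{2\pi\vartheta_1}\big)^{3/2}\exp\big(-\frac{m_1|v-u_1|^2}{2\vartheta_1}\big)$. Set $\alpha=\frac{m_1}{m+m_1}$, $\beta=\frac{1-\epsilon}{2}$, $\gamma=\alpha\frac{1-\beta}{1-2\beta}$, $\bar\gamma=(1-\alpha)\frac{1-\beta}{1-2\beta}$ and $\mu=\frac{1-2\alpha(1-\beta)}{\alpha(1-\beta)}$ (note $1+\mu>0$). For $v,w\in\mathbb R^3$, $n\in\mathbb S^2$ and $q=v-w$, let $v_\star=v-2\gamma(q\cdot n)n$, $w_\star=w+2\bar\gamma(q\cdot n)n$. The gain operator is $Q^+f(v)=\epsilon^{-2}\int_{\mathbb R^3\times\mathbb S^2}|q\cdot n|\,f(v_\star)\mathcal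 M_1(w_\star)\,dw\,dn$ ($dn$ the surface measure on $\mathbb S^2$), and the collision frequency is $\sigma(v)=\int_{\mathbb R^3\times\mathbb S^2}|q\cdot n|\,\mathcal M_1(w)\,dw\,dn$. *)

theory Defs
  imports "HOL-Analysis.Analysis"
begin

type_synonym vec3 = "real ^ 3"

text \<open>Surface measure on the unit sphere S^2, defined via the cone measure:
  the surface measure of A \<subseteq> S^2 is 3 times the Lebesgue measure of the cone
  {r n | 0 < r \<le> 1, n \<in> A}.  Total mass is 4 pi.\<close>
definition sphere_measure :: "vec3 measure" where
  "sphere_measure =
     density (distr (restrict_space lborel (cball 0 1 - {0}))
                    (restrict_space borel (sphere 0 1))
                    (\<lambda>y. y /\<^sub>R norm y))
             (\<lambda>_. 3)"

definition Maxw1 :: "real \<Rightarrow> real \<Rightarrow> vec3 \<Rightarrow> vec3 \<Rightarrow> real" where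
  "Maxw1 m1 th1 u1 v =
     (m1 / (2 * pi * th1)) powr (3/2) * exp (- (m1 * (norm (v - u1))\<^sup>2) / (2 * th1))"

definition alpha_c :: "real \<Rightarrow> real \<Rightarrow> real" where
  "alpha_c m m1 = m1 / (m + m1)"

definition beta_c :: "real \<Rightarrow> real" where
  "beta_c eps = (1 - eps) / 2"

definition gamma_c :: "real \<Rightarrow> real \<Rightarrow> real \<Rightarrow> real" where
  "gamma_c m m1 eps = alpha_c m m1 * (1 - beta_c eps) / (1 - 2 * beta_c eps)"

definition gammabar_c :: "real \<Rightarrow> real \<Rightarrow> real \<Rightarrow> real" where
  "gammabar_c m m1 eps = (1 - alpha_c m m1) * (1 - beta_c eps) / (1 - 2 * beta_c eps)"

definition mu_c :: "real \<Rightarrow> real \<Rightarrow> real \<Rightarrow> real" where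
  "mu_c m m1 eps = (1 - 2 * alpha_c m m1 * (1 - beta_c eps)) / (alpha_c m m1 * (1 - beta_c eps))"

definition vstar :: "real \<Rightarrow> real \<Rightarrow> real \<Rightarrow> vec3 \<Rightarrow> vec3 \<Rightarrow> vec3 \<Rightarrow> vec3" where
  "vstar m m1 eps v w n = v - (2 * gamma_c m m1 eps * ((v - w) \<bullet> n)) *\<^sub>R n"

definition wstar :: "real \<Rightarrow> real \<Rightarrow> real \<Rightarrow> vec3 \<Rightarrow> vec3 \<Rightarrow> vec3 \<Rightarrow> vec3" where
  "wstar m m1 eps v w n = w + (2 * gammabar_c m m1 eps * ((v - w) \<bullet> n)) *\<^sub>R n"

definition coll_freq :: "real \<Rightarrow> real \<Rightarrow> vec3 \<Rightarrow> vec3 \<Rightarrow> real" where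
  "coll_freq m1 th1 u1 v =
     (\<integral>p. \<bar>(v - fst p) \<bullet> snd p\<bar> * Maxw1 m1 th1 u1 (fst p) \<partial>(lborel \<Otimes>\<^sub>M sphere_measure))"

definition gain_integrand ::
  "real \<Rightarrow> real \<Rightarrow> real \<Rightarrow> real \<Rightarrow> vec3 \<Rightarrow> (vec3 \<times> vec3 \<Rightarrow> real) \<Rightarrow> vec3 \<Rightarrow> vec3 \<Rightarrow> vec3 \<times> vec3 \<Rightarrow> real" where
  "gain_integrand m m1 eps th1 u1 f x v p =
     \<bar>(v - fst p) \<bullet> snd p\<bar> * f (x, vstar m m1 eps v (fst p) (snd p))
       * Maxw1 m1 th1 u1 (wstar m m1 eps v (fst p) (snd p))"

definition Qplus ::
  "real \<Rightarrow> real \<Rightarrow> real \<Rightarrow> real \<Rightarrow> vec3 \<Rightarrow> (vec3 \<times> vec3 \<Rightarrow> real) \<Rightarrow> vec3 \<Rightarrow> vec3 \<Rightarrow> real" where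
  "Qplus m m1 eps th1 u1 f x v =
     eps powr (-2) * (\<integral>p. gain_integrand m m1 eps th1 u1 f x v p \<partial>(lborel \<Otimes>\<^sub>M sphere_measure))"

definition kern :: "real \<Rightarrow> real \<Rightarrow> real \<Rightarrow> real \<Rightarrow> vec3 \<Rightarrow> vec3 \<Rightarrow> vec3 \<Rightarrow> real" where
  "kern m m1 eps th1 u1 v v' =
     sqrt (m1 / (2 * pi * th1)) * (1 / norm (v - v')) *
     exp (- (m1 / (8 * th1)) *
       ((1 + mu_c m m1 eps) * norm (v - v')
         + ((norm (v - u1))\<^sup>2 - (norm (v' - u1))\<^sup>2) / norm (v - v'))\<^sup>2)"

end

(*
  For a fixed direction n, substituting q = v - w and rotating n onto the first axis collapses
  the w-integral of the gain term to a one-dimensional Gaussian integral in s = q . n, so that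
  Q^+ becomes an integral over n in S^2 of integrals along the lines {s n}, weighted by |s|.
  These lines sweep out R^3 with density 2/|u| (polar coordinates, via the cone description of
  the surface measure), and the affine change u = (v - v')/(2 gamma) produces k(v,v').
  The representation holds wherever the gain integral of |f| is finite, which is almost
  everywhere: integrating it over v gives eps^2 times the integral of sigma |f|, because
  translating v along n rescales s by 2 gamma + 2 gammabar - 1 = 1/eps.
*)
theory Submission
  imports Defs "HOL-Probability.Distributions" "HOL-Real_Asymp.Real_Asymp"
begin

section \<open>Lebesgue measure on three-space\<close>

lemma borel_measurable_orthogonal_transformation:
  fixes L :: "'a::euclidean_space \<Rightarrow> 'a"
  assumes "orthogonal_transformation L"
  shows "L \<in> borel_measurable borel"
  using assms orthogonal_transformation_linear linear_conv_bounded_linear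
  by (intro borel_measurable_continuous_onI linear_continuous_on) blast

lemma lborel_distr_orthogonal_transformation:
  fixes L :: "real^'n::{finite,wellorder} \<Rightarrow> real^'n::{finite,wellorder}"
  assumes L: "orthogonal_transformation L"
  shows "distr lborel borel L = lborel"
proof (rule lborel_eqI[symmetric])
  have Lm[measurable]: "L \<in> borel_measurable borel"
    using L by (rule borel_measurable_orthogonal_transformation)
  obtain Li where Li: "orthogonal_transformation Li" "\<And>x. Li (L x) = x" "\<And>x. L (Li x) = x"
    using L orthogonal_transformation_inv orthogonal_transformation_bij by (metis bij_inv_eq_iff)
  fix l u :: "real^'n::{finite,wellorder}" assume le: "\<And>b. b \<in> Basis \<Longrightarrow> l \<bullet> b \<le> u \<bullet> b"
  have pre: "L -` box l u = Li ` box l u"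
  proof (intro set_eqI iffI)
    fix x assume "x \<in> L -` box l u"
    then show "x \<in> Li ` box l u" using Li(2)[of x] by (metis image_eqI vimageD)
  next
    fix x assume "x \<in> Li ` box l u"
    then show "x \<in> L -` box l u" using Li(3) by auto
  qed
  have "L -` box l u \<in> sets lborel"
    using measurable_sets_borel[OF Lm, of "box l u"] by simp
  then have "emeasure (distr lborel borel L) (box l u) = emeasure lebesgue (L -` box l u)"
    by (simp add: emeasure_distr emeasure_completion sets_completionI_sets)
  also have "\<dots> = measure lebesgue (Li ` box l u)"
    unfolding pre using measurable_orthogonal_image[OF Li(1) lmeasurable_box[of l u]]
    by (intro emeasure_eq_measure2)
  also have "\<dots> = measure lebesgue (box l u)"
    using measure_orthogonal_image[OF Li(1) lmeasurable_box[of l u]] by (rule arg_cong)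
  also have "\<dots> = (\<Prod>b\<in>Basis. (u - l) \<bullet> b)"
    using le by (simp add: measure_completion[of "box l u" lborel] measure_lborel_box_eq)
  finally show "emeasure (distr lborel borel L) (box l u) = (\<Prod>b\<in>Basis. (u - l) \<bullet> b)" .
qed simp

lemma nn_integral_lborel_affine:
  fixes f :: "'a::euclidean_space \<Rightarrow> ennreal" and c :: real
  assumes [measurable]: "f \<in> borel_measurable borel" and c: "c \<noteq> 0"
  shows "(\<integral>\<^sup>+x. f x \<partial>lborel) = ennreal (\<bar>c\<bar> ^ DIM('a)) * (\<integral>\<^sup>+x. f (t + c *\<^sub>R x) \<partial>lborel)"
  by (subst lborel_affine[OF c, of t])
     (simp add: nn_integral_density nn_integral_distr nn_integral_cmult)

definition vec3_of_triple :: "real \<times> real \<times> real \<Rightarrow> vec3" where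
  "vec3_of_triple p = (\<chi> i. if i = 1 then fst p else if i = 2 then fst (snd p) else snd (snd p))"

lemma vec3_of_triple_nth [simp]:
  "vec3_of_triple (a, b, c) $ 1 = a" "vec3_of_triple (a, b, c) $ 2 = b" "vec3_of_triple (a, b, c) $ 3 = c"
  by (simp_all add: vec3_of_triple_def)

lemma borel_measurable_vec3_of_triple [measurable]:
  "vec3_of_triple \<in> borel_measurable (lborel \<Otimes>\<^sub>M (lborel \<Otimes>\<^sub>M lborel))"
proof -
  have "sets (lborel \<Otimes>\<^sub>M (lborel \<Otimes>\<^sub>M lborel)) = sets (borel :: (real \<times> real \<times> real) measure)"
  proof -
    have "sets (lborel \<Otimes>\<^sub>M (lborel \<Otimes>\<^sub>M lborel))
        = sets ((borel::real measure) \<Otimes>\<^sub>M ((borel::real measure) \<Otimes>\<^sub>M (borel::real measure)))"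
      by (intro sets_pair_measure_cong sets_lborel)
    then show ?thesis unfolding borel_prod .
  qed
  moreover have "vec3_of_triple \<in> borel_measurable borel"
    unfolding vec3_of_triple_def
  proof (intro borel_measurable_continuous_onI continuous_on_vec_lambda allI)
    fix i :: 3
    show "continuous_on UNIV (\<lambda>x::real \<times> real \<times> real.
            if i = 1 then fst x else if i = 2 then fst (snd x) else snd (snd x))"
      by (cases "i = 1"; cases "i = 2") (simp_all add: continuous_intros)
  qed
  ultimately show ?thesis
    using measurable_cong_sets by blast
qed

lemma prod_Basis_vec3:
  fixes f :: "vec3 \<Rightarrow> 'a::comm_monoid_mult"
  shows "(\<Prod>b\<in>Basis. f b) = f (axis 1 1) * f (axis 2 1) * f (axis 3 1)"
proof -
  have B: "(Basis::vec3 set) = (\<lambda>i. axis i 1) ` UNIV" by (auto simp: Basis_vec_def)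
  have inj: "inj (\<lambda>i::3. axis i (1::real))" by (auto intro!: injI simp: axis_eq_axis)
  have "prod g (UNIV::3 set) = g 1 * g 2 * g 3" for g :: "3 \<Rightarrow> 'a"
    unfolding UNIV_3 by (simp add: ac_simps)
  from this[of "\<lambda>i. f (axis i 1)"] show ?thesis unfolding B prod.reindex[OF inj] by (simp only: comp_def)
qed

lemma sigma_finite_lborel_pair: "sigma_finite_measure (lborel \<Otimes>\<^sub>M lborel :: (real \<times> real) measure)"
  by (simp add: lborel_prod sigma_finite_lborel)

lemma lborel_distr_vec3_of_triple:
  "distr (lborel \<Otimes>\<^sub>M (lborel \<Otimes>\<^sub>M lborel)) borel vec3_of_triple = lborel"
proof (rule lborel_eqI[symmetric])
  fix l u :: vec3 assume le: "\<And>b. b \<in> Basis \<Longrightarrow> l \<bullet> b \<le> u \<bullet> b"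
  have le3: "l$1 \<le> u$1" "l$2 \<le> u$2" "l$3 \<le> u$3"
    using le[of "axis 1 1"] le[of "axis 2 1"] le[of "axis 3 1"]
    by (auto simp: Basis_vec_def inner_axis)
  have pre: "vec3_of_triple -` box l u \<inter> space (lborel \<Otimes>\<^sub>M (lborel \<Otimes>\<^sub>M lborel)) =
     {l$1<..<u$1} \<times> ({l$2<..<u$2} \<times> {l$3<..<u$3})"
    by (auto simp: mem_box_cart forall_3 space_pair_measure)
  have "emeasure (distr (lborel \<Otimes>\<^sub>M (lborel \<Otimes>\<^sub>M lborel)) borel vec3_of_triple) (box l u)
     = emeasure (lborel \<Otimes>\<^sub>M (lborel \<Otimes>\<^sub>M lborel)) ({l$1<..<u$1} \<times> ({l$2<..<u$2} \<times> {l$3<..<u$3}))"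
    by (subst emeasure_distr) (auto simp: pre)
  also have "\<dots> = ennreal (u$1 - l$1) * (ennreal (u$2 - l$2) * ennreal (u$3 - l$3))"
    using le3
    by (simp add: sigma_finite_measure.emeasure_pair_measure_Times[OF sigma_finite_lborel_pair]
                  lborel.emeasure_pair_measure_Times)
  also have "\<dots> = (\<Prod>b\<in>Basis. (u - l) \<bullet> b)"
    using le3 by (simp add: ennreal_mult prod_Basis_vec3 inner_axis mult.assoc)
  finally show "emeasure (distr (lborel \<Otimes>\<^sub>M (lborel \<Otimes>\<^sub>M lborel)) borel vec3_of_triple) (box l u)
     = (\<Prod>b\<in>Basis. (u - l) \<bullet> b)" .
qed simp

lemma nn_integral_lborel_vec3:
  fixes f :: "vec3 \<Rightarrow> ennreal"
  assumes [measurable]: "f \<in> borel_measurable borel"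
  shows "(\<integral>\<^sup>+x. f x \<partial>lborel)
       = (\<integral>\<^sup>+a. \<integral>\<^sup>+b. \<integral>\<^sup>+c. f (vec3_of_triple (a, b, c)) \<partial>lborel \<partial>lborel \<partial>lborel)"
proof -
  have "(\<integral>\<^sup>+x. f x \<partial>lborel) = (\<integral>\<^sup>+p. f (vec3_of_triple p) \<partial>(lborel \<Otimes>\<^sub>M (lborel \<Otimes>\<^sub>M lborel)))"
    by (subst lborel_distr_vec3_of_triple[symmetric]) (simp add: nn_integral_distr)
  also have "\<dots> = (\<integral>\<^sup>+a. \<integral>\<^sup>+q. f (vec3_of_triple (a, q)) \<partial>(lborel \<Otimes>\<^sub>M lborel) \<partial>lborel)"
    by (subst sigma_finite_measure.nn_integral_fst[OF sigma_finite_lborel_pair, symmetric]) auto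
  also have "\<dots> = (\<integral>\<^sup>+a. \<integral>\<^sup>+b. \<integral>\<^sup>+c. f (vec3_of_triple (a, b, c)) \<partial>lborel \<partial>lborel \<partial>lborel)"
    by (intro nn_integral_cong, subst lborel.nn_integral_fst[symmetric]) auto
  finally show ?thesis .
qed

section \<open>The Maxwellian and its one-dimensional marginal\<close>

definition Maxw1_marginal :: "real \<Rightarrow> real \<Rightarrow> real \<Rightarrow> real" where
  "Maxw1_marginal m1 th1 = normal_density 0 (sqrt (th1 / m1))"

lemma Maxw1_marginal_nonneg [simp]: "0 \<le> Maxw1_marginal m1 th1 t"
  by (simp add: Maxw1_marginal_def)

lemma borel_measurable_Maxw1_marginal [measurable]: "Maxw1_marginal m1 th1 \<in> borel_measurable borel"
  by (simp add: Maxw1_marginal_def)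

lemma Maxw1_marginal_eq:
  assumes "m1 > 0" "th1 > 0"
  shows "Maxw1_marginal m1 th1 t = sqrt (m1 / (2 * pi * th1)) * exp (- (m1 * t\<^sup>2) / (2 * th1))"
  using assms by (simp add: Maxw1_marginal_def normal_density_def real_sqrt_divide real_sqrt_mult field_simps)

lemma Maxw1_marginal_minus: "Maxw1_marginal m1 th1 (- t) = Maxw1_marginal m1 th1 t"
  by (simp add: Maxw1_marginal_def normal_density_def)

lemma nn_integral_Maxw1_marginal:
  assumes "m1 > 0" "th1 > 0"
  shows "(\<integral>\<^sup>+t. ennreal (Maxw1_marginal m1 th1 (d - t)) \<partial>lborel) = 1"
proof -
  have s: "0 < sqrt (th1 / m1)" using assms by simp
  have "Maxw1_marginal m1 th1 (d - t) = normal_density d (sqrt (th1 / m1)) t" for t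
    by (simp add: Maxw1_marginal_def normal_density_def power2_commute)
  then show ?thesis
    using integral_normal_density[OF s] integrable_normal_density[OF s]
    by (simp add: nn_integral_eq_integral)
qed

lemma nn_integral_abs_Maxw1_marginal_finite:
  assumes "m1 > 0" "th1 > 0"
  shows "(\<integral>\<^sup>+t. ennreal \<bar>t\<bar> * ennreal (Maxw1_marginal m1 th1 t) \<partial>lborel) < \<infinity>"
proof -
  have "integrable lborel (\<lambda>t. normal_density 0 (sqrt (th1 / m1)) t * \<bar>t - 0\<bar> ^ 1)"
    by (rule integrable_normal_moment_abs) (use assms in simp)
  then show ?thesis
    by (simp add: integrable_iff_bounded Maxw1_marginal_def ennreal_mult[symmetric] mult.commute)
qed

lemma nn_integral_abs_Maxw1_marginal_shift_le:
  assumes "m1 > 0" "th1 > 0"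
  shows "(\<integral>\<^sup>+s. ennreal \<bar>s\<bar> * ennreal (Maxw1_marginal m1 th1 (d - s)) \<partial>lborel)
     \<le> ennreal \<bar>d\<bar> + (\<integral>\<^sup>+t. ennreal \<bar>t\<bar> * ennreal (Maxw1_marginal m1 th1 t) \<partial>lborel)"
proof -
  let ?\<phi> = "\<lambda>s. ennreal (Maxw1_marginal m1 th1 (d - s))"
  have "(\<integral>\<^sup>+s. ennreal \<bar>s\<bar> * ?\<phi> s \<partial>lborel)
      \<le> (\<integral>\<^sup>+s. ennreal \<bar>d\<bar> * ?\<phi> s + ennreal \<bar>s - d\<bar> * ?\<phi> s \<partial>lborel)"
  proof (rule nn_integral_mono)
    fix s :: real
    have "ennreal \<bar>s\<bar> \<le> ennreal \<bar>d\<bar> + ennreal \<bar>s - d\<bar>"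
      by (simp add: ennreal_plus[symmetric] del: ennreal_plus)
    then show "ennreal \<bar>s\<bar> * ?\<phi> s \<le> ennreal \<bar>d\<bar> * ?\<phi> s + ennreal \<bar>s - d\<bar> * ?\<phi> s"
      by (metis distrib_right mult_right_mono zero_le)
  qed
  also have "\<dots> = ennreal \<bar>d\<bar> * (\<integral>\<^sup>+s. ?\<phi> s \<partial>lborel) + (\<integral>\<^sup>+s. ennreal \<bar>s - d\<bar> * ?\<phi> s \<partial>lborel)"
    by (simp add: nn_integral_add nn_integral_cmult)
  also have "(\<integral>\<^sup>+s. ennreal \<bar>s - d\<bar> * ?\<phi> s \<partial>lborel)
      = (\<integral>\<^sup>+t. ennreal \<bar>t\<bar> * ennreal (Maxw1_marginal m1 th1 t) \<partial>lborel)"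
    using nn_integral_real_affine[of "\<lambda>s. ennreal \<bar>s - d\<bar> * ?\<phi> s" "-1" d] by simp
  finally show ?thesis
    by (simp add: nn_integral_Maxw1_marginal[OF assms])
qed

lemma power2_norm_vec3: "(norm (z::vec3))\<^sup>2 = (z$1)\<^sup>2 + (z$2)\<^sup>2 + (z$3)\<^sup>2"
  unfolding power2_norm_eq_inner inner_vec_def sum_3 by (simp add: power2_eq_square)

lemma Maxw1_eq_prod_marginal:
  assumes "m1 > 0" "th1 > 0"
  shows "Maxw1 m1 th1 u1 w = Maxw1_marginal m1 th1 ((w - u1)$1) * Maxw1_marginal m1 th1 ((w - u1)$2)
                             * Maxw1_marginal m1 th1 ((w - u1)$3)"
proof -
  define C where "C = sqrt (m1 / (2 * pi * th1))"
  have "(m1 / (2 * pi * th1)) powr (3/2) = (m1 / (2 * pi * th1)) powr (1/2 + 1/2 + 1/2)"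
    by simp
  also have "\<dots> = C * C * C"
    unfolding C_def using assms by (simp only: powr_add) (simp add: powr_half_sqrt)
  finally have C3: "(m1 / (2 * pi * th1)) powr (3/2) = C * C * C" .
  have "- (m1 * (norm (w - u1))\<^sup>2) / (2 * th1) = - (m1 * ((w - u1)$1)\<^sup>2) / (2 * th1)
      + - (m1 * ((w - u1)$2)\<^sup>2) / (2 * th1) + - (m1 * ((w - u1)$3)\<^sup>2) / (2 * th1)"
    unfolding power2_norm_vec3 using assms by (simp add: field_simps)
  then have "exp (- (m1 * (norm (w - u1))\<^sup>2) / (2 * th1)) = exp (- (m1 * ((w - u1)$1)\<^sup>2) / (2 * th1))
      * exp (- (m1 * ((w - u1)$2)\<^sup>2) / (2 * th1)) * exp (- (m1 * ((w - u1)$3)\<^sup>2) / (2 * th1))"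
    by (simp only: exp_add[symmetric])
  then show ?thesis
    unfolding Maxw1_def Maxw1_marginal_eq[OF assms] C3 C_def[symmetric]
    by (simp only: mult_ac)
qed

lemma Maxw1_nonneg [simp]: "0 \<le> Maxw1 m1 th1 u1 w"
  by (simp add: Maxw1_def)

lemma borel_measurable_Maxw1 [measurable]: "Maxw1 m1 th1 u1 \<in> borel_measurable borel"
  unfolding Maxw1_def[abs_def] by measurable

lemma nn_integral_Maxw1_along_direction:
  fixes G :: "real \<Rightarrow> ennreal" and n b :: vec3 and c :: real
  assumes m1: "m1 > 0" and th1: "th1 > 0" and n: "norm n = 1"
    and [measurable]: "G \<in> borel_measurable borel"
  shows "(\<integral>\<^sup>+q. G (q \<bullet> n) * ennreal (Maxw1 m1 th1 u1 (b - q + (c * (q \<bullet> n)) *\<^sub>R n)) \<partial>lborel)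
       = (\<integral>\<^sup>+s. G s * ennreal (Maxw1_marginal m1 th1 ((b - u1) \<bullet> n + (c - 1) * s)) \<partial>lborel)"
proof -
  let ?\<phi> = "Maxw1_marginal m1 th1"
  define e1 :: vec3 where "e1 = axis 1 1"
  obtain L where L: "orthogonal_transformation L" "L e1 = n"
    using orthogonal_transformation_exists[of e1 n] n by (auto simp: e1_def)
  have [measurable]: "L \<in> borel_measurable borel"
    using L(1) by (rule borel_measurable_orthogonal_transformation)
  have Linner: "L x \<bullet> L y = x \<bullet> y" for x y
    using L(1) by (simp add: orthogonal_transformation_def)
  obtain Li where Li: "\<And>x. L (Li x) = x"
    using L(1) orthogonal_transformation_surj by (metis surj_def)
  define d where "d = Li (b - u1)"
  have d1: "d $ 1 = (b - u1) \<bullet> n"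
    by (metis L(2) Li Linner cart_eq_inner_axis d_def e1_def)
  define F where "F q = G (q \<bullet> n) * ennreal (Maxw1 m1 th1 u1 (b - q + (c * (q \<bullet> n)) *\<^sub>R n))" for q
  have [measurable]: "F \<in> borel_measurable borel" unfolding F_def by measurable
  \<comment> \<open>in the frame rotated by L, which maps e1 to n, the Maxwellian factorises into marginals\<close>
  have FL: "F (L y) = G (y$1) * ennreal (?\<phi> (d$1 + (c - 1) * y$1)) * ennreal (?\<phi> (d$2 - y$2))
                      * ennreal (?\<phi> (d$3 - y$3))" for y
  proof -
    have y1: "L y \<bullet> n = y $ 1"
      by (simp add: L(2)[symmetric] Linner e1_def cart_eq_inner_axis)
    have "b - L y + (c * y$1) *\<^sub>R n - u1 = L (d - y + (c * y$1) *\<^sub>R e1)"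
      using orthogonal_transformation_linear[OF L(1)]
      by (simp add: d_def Li L(2) linear_diff linear_add linear_scale)
    then have "Maxw1 m1 th1 u1 (b - L y + (c * y$1) *\<^sub>R n) = Maxw1 m1 th1 0 (d - y + (c * y$1) *\<^sub>R e1)"
      using L(1) by (simp add: Maxw1_def orthogonal_transformation_norm)
    also have "\<dots> = ?\<phi> (d$1 + (c - 1) * y$1) * ?\<phi> (d$2 - y$2) * ?\<phi> (d$3 - y$3)"
      by (simp add: Maxw1_eq_prod_marginal[OF m1 th1] e1_def axis_def algebra_simps)
    finally show ?thesis by (simp add: F_def y1 ennreal_mult' mult.assoc)
  qed
  have "(\<integral>\<^sup>+q. F q \<partial>lborel) = (\<integral>\<^sup>+y. F (L y) \<partial>lborel)"
    by (subst lborel_distr_orthogonal_transformation[OF L(1), symmetric]) (simp add: nn_integral_distr)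
  also have "\<dots> = (\<integral>\<^sup>+a. \<integral>\<^sup>+b'. \<integral>\<^sup>+c'. F (L (vec3_of_triple (a, b', c'))) \<partial>lborel \<partial>lborel \<partial>lborel)"
    by (rule nn_integral_lborel_vec3) measurable
  also have "\<dots> = (\<integral>\<^sup>+a. G a * ennreal (?\<phi> (d$1 + (c - 1) * a)) \<partial>lborel)"
    by (simp add: FL nn_integral_cmult nn_integral_Maxw1_marginal[OF m1 th1])
  finally show ?thesis unfolding F_def d1 .
qed

section \<open>Surface measure and polar coordinates\<close>

lemma sets_sphere_measure: "sets sphere_measure = sets (restrict_space borel (sphere (0::vec3) 1))"
  by (simp add: sphere_measure_def)

lemma space_sphere_measure: "space sphere_measure = sphere (0::vec3) 1"
  by (simp add: sphere_measure_def space_restrict_space)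

lemma measurable_sphere_measure_ident: "(\<lambda>x. x) \<in> sphere_measure \<rightarrow>\<^sub>M (borel :: vec3 measure)"
  using measurable_cong_sets[OF sets_sphere_measure refl]
        measurable_restrict_space1[OF measurable_ident_sets[OF refl]]
  by blast

lemma measurable_snd_sphere_measure [measurable]:
  "snd \<in> (M \<Otimes>\<^sub>M sphere_measure) \<rightarrow>\<^sub>M (borel :: vec3 measure)"
  using measurable_compose[OF measurable_snd[of M sphere_measure] measurable_sphere_measure_ident] by simp

lemma measurable_fst_sphere_measure [measurable]:
  "fst \<in> (sphere_measure \<Otimes>\<^sub>M M) \<rightarrow>\<^sub>M (borel :: vec3 measure)"
  using measurable_compose[OF measurable_fst[of sphere_measure M] measurable_sphere_measure_ident] by simp

lemma sets_punctured_unit_ball [measurable]: "cball (0::'a::euclidean_space) 1 - {0} \<in> sets borel"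
  by (intro sets.Diff borel_closed) auto

lemma nn_integral_sphere_measure:
  fixes F :: "vec3 \<Rightarrow> ennreal"
  assumes [measurable]: "F \<in> borel_measurable borel"
  shows "(\<integral>\<^sup>+n. F n \<partial>sphere_measure)
       = 3 * (\<integral>\<^sup>+y. F (y /\<^sub>R norm y) * indicator (cball 0 1 - {0}) y \<partial>lborel)"
proof -
  have T: "(\<lambda>y::vec3. y /\<^sub>R norm y)
      \<in> restrict_space lborel (cball 0 1 - {0}) \<rightarrow>\<^sub>M restrict_space borel (sphere 0 1)"
    by (rule measurable_restrict_space2) (auto simp: space_restrict_space intro: measurable_restrict_space1)
  have "(\<integral>\<^sup>+n. F n \<partial>sphere_measure)
      = (\<integral>\<^sup>+y. 3 * F (y /\<^sub>R norm y) \<partial>restrict_space lborel (cball 0 1 - {0}))"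
    unfolding sphere_measure_def
    by (simp add: nn_integral_density nn_integral_distr[OF T] measurable_restrict_space1)
  also have "\<dots> = (\<integral>\<^sup>+y. 3 * (F (y /\<^sub>R norm y) * indicator (cball 0 1 - {0}) y) \<partial>lborel)"
    by (subst nn_integral_restrict_space) (auto simp: mult.assoc)
  finally show ?thesis
    by (simp add: nn_integral_cmult)
qed

lemma finite_measure_sphere_measure: "finite_measure sphere_measure"
proof (rule finite_measureI)
  have "emeasure sphere_measure (space sphere_measure) = (\<integral>\<^sup>+n. 1 \<partial>sphere_measure)"
    by simp
  also have "\<dots> = 3 * emeasure lborel (cball (0::vec3) 1 - {0})"
    by (subst nn_integral_sphere_measure) (auto intro!: nn_integral_indicator)
  also have "\<dots> < \<infinity>"
  proof -
    have "bounded (cball (0::vec3) 1 - {0})"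
      by (rule bounded_subset[OF bounded_cball]) auto
    then show ?thesis
      using emeasure_bounded_finite by (auto simp: ennreal_mult_less_top)
  qed
  finally show "emeasure sphere_measure (space sphere_measure) \<noteq> \<infinity>" by simp
qed

interpretation sphere: finite_measure sphere_measure
  by (rule finite_measure_sphere_measure)

interpretation lborel_sphere: pair_sigma_finite "lborel :: vec3 measure" sphere_measure
  by (intro pair_sigma_finite.intro sigma_finite_lborel sphere.sigma_finite_measure_axioms)

lemma nn_integral_inverse_power4_atLeast:
  assumes "r > 0"
  shows "(\<integral>\<^sup>+t. ennreal (1 / t^4) * indicator {r..} t \<partial>lborel) = ennreal (1 / (3 * r^3))"
proof -
  have "(\<integral>\<^sup>+t. ennreal (1 / t^4) * indicator {r..} t \<partial>lborel) = ennreal (0 - (- 1 / (3 * r^3)))"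
  proof (rule nn_integral_FTC_atLeast)
    fix x :: real assume "r \<le> x"
    then have "x \<noteq> 0" using assms by auto
    then show "((\<lambda>t. - 1 / (3 * t^3)) has_real_derivative 1 / x^4) (at x)"
      by (auto intro!: derivative_eq_intros simp: field_simps power_eq_if)
  qed (simp_all, real_asymp)
  then show ?thesis by simp
qed

lemma nn_integral_inverse_power4_abs_ge:
  assumes r: "r > 0"
  shows "(\<integral>\<^sup>+t. ennreal (1 / t^4) * indicator {t. r \<le> \<bar>t\<bar>} t \<partial>lborel) = ennreal (2 / (3 * r^3))"
proof -
  have "(\<integral>\<^sup>+t. ennreal (1 / t^4) * indicator {..-r} t \<partial>lborel)
      = (\<integral>\<^sup>+t. ennreal (1 / t^4) * indicator {r..} t \<partial>lborel)"
    using nn_integral_real_affine[of "\<lambda>t. ennreal (1 / t^4) * indicator {..-r} t" "-1" 0]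
    by (simp add: indicator_def)
  moreover have "ennreal (1 / t^4) * indicator {t. r \<le> \<bar>t\<bar>} t =
      ennreal (1 / t^4) * indicator {r..} t + ennreal (1 / t^4) * indicator {..-r} t" for t
    using r by (auto split: split_indicator)
  ultimately show ?thesis
    using r by (simp add: nn_integral_add nn_integral_inverse_power4_atLeast ennreal_plus[symmetric]
                     del: ennreal_plus)
qed

lemma nn_integral_radial_tail:
  fixes u :: "'a::real_normed_vector"
  shows "(\<integral>\<^sup>+t. ennreal (if u \<noteq> 0 \<and> norm u \<le> \<bar>t\<bar> then (norm u)\<^sup>2 / t^4 else 0) \<partial>lborel)
       = ennreal (2 / (3 * norm u))"
proof (cases "u = 0")
  case False
  then have r: "norm u > 0" by simp
  have "(\<integral>\<^sup>+t. ennreal (if u \<noteq> 0 \<and> norm u \<le> \<bar>t\<bar> then (norm u)\<^sup>2 / t^4 else 0) \<partial>lborel)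
      = (\<integral>\<^sup>+t. ennreal ((norm u)\<^sup>2) * (ennreal (1 / t^4) * indicator {t. norm u \<le> \<bar>t\<bar>} t) \<partial>lborel)"
    using False by (intro nn_integral_cong) (auto simp: ennreal_mult[symmetric] split: split_indicator)
  also have "\<dots> = ennreal ((norm u)\<^sup>2) * ennreal (2 / (3 * (norm u)^3))"
    using nn_integral_inverse_power4_abs_ge[OF r] by (simp add: nn_integral_cmult)
  also have "\<dots> = ennreal (2 / (3 * norm u))"
    using r by (simp add: ennreal_mult[symmetric] power_eq_if field_simps)
  finally show ?thesis .
qed simp

lemma nn_integral_line_rescale:
  fixes H :: "'a::euclidean_space \<Rightarrow> ennreal" and y :: 'a
  assumes [measurable]: "H \<in> borel_measurable borel" and y: "y \<noteq> 0"
  shows "(\<integral>\<^sup>+s. ennreal \<bar>s\<bar> * H (s *\<^sub>R (y /\<^sub>R norm y)) \<partial>lborel)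
       = ennreal ((norm y)\<^sup>2) * (\<integral>\<^sup>+t. ennreal \<bar>t\<bar> * H (t *\<^sub>R y) \<partial>lborel)"
proof -
  have "(\<integral>\<^sup>+s. ennreal \<bar>s\<bar> * H (s *\<^sub>R (y /\<^sub>R norm y)) \<partial>lborel)
      = ennreal (norm y) * (\<integral>\<^sup>+t. ennreal \<bar>norm y * t\<bar> * H ((norm y * t) *\<^sub>R (y /\<^sub>R norm y)) \<partial>lborel)"
    using nn_integral_real_affine[of "\<lambda>s. ennreal \<bar>s\<bar> * H (s *\<^sub>R (y /\<^sub>R norm y))" "norm y" 0] y
    by simp
  also have "\<dots> = ennreal (norm y) * (\<integral>\<^sup>+t. ennreal (norm y) * (ennreal \<bar>t\<bar> * H (t *\<^sub>R y)) \<partial>lborel)"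
  proof -
    have e: "(norm y * t) *\<^sub>R (y /\<^sub>R norm y) = t *\<^sub>R y" for t
      using y by simp
    show ?thesis
      unfolding e by (simp add: abs_mult ennreal_mult mult.assoc)
  qed
  finally show ?thesis
    by (simp add: nn_integral_cmult power2_eq_square ennreal_mult mult.assoc)
qed

lemma nn_integral_punctured_ball_rescale:
  fixes H :: "vec3 \<Rightarrow> ennreal" and t :: real
  assumes [measurable]: "H \<in> borel_measurable borel" and t: "t \<noteq> 0"
  shows "(\<integral>\<^sup>+y. ennreal ((norm y)\<^sup>2) * indicator (cball 0 1 - {0}) y * ennreal \<bar>t\<bar> * H (t *\<^sub>R y) \<partial>lborel)
       = (\<integral>\<^sup>+u. ennreal (if u \<noteq> 0 \<and> norm u \<le> \<bar>t\<bar> then (norm u)\<^sup>2 / t^4 else 0) * H u \<partial>lborel)"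
proof -
  have "(\<integral>\<^sup>+y. ennreal ((norm y)\<^sup>2) * indicator (cball 0 1 - {0}) y * ennreal \<bar>t\<bar> * H (t *\<^sub>R y) \<partial>lborel)
      = (\<integral>\<^sup>+u. ennreal (\<bar>1/t\<bar> ^ 3) * (ennreal ((norm ((1/t) *\<^sub>R u))\<^sup>2) * indicator (cball 0 1 - {0}) ((1/t) *\<^sub>R u)
             * ennreal \<bar>t\<bar> * H (t *\<^sub>R ((1/t) *\<^sub>R u))) \<partial>lborel)"
    using t by (subst nn_integral_lborel_affine[where c = "1/t" and t = 0]) (simp_all add: nn_integral_cmult)
  also have "\<dots> = (\<integral>\<^sup>+u. ennreal (if u \<noteq> 0 \<and> norm u \<le> \<bar>t\<bar> then (norm u)\<^sup>2 / t^4 else 0) * H u \<partial>lborel)"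
  proof (intro nn_integral_cong)
    fix u :: vec3
    have ind: "indicator (cball 0 1 - {0}) ((1/t) *\<^sub>R u) = (if u \<noteq> 0 \<and> norm u \<le> \<bar>t\<bar> then 1 else (0::ennreal))"
      using t by (auto split: split_indicator simp: field_simps)
    have val: "\<bar>1/t\<bar> ^ 3 * ((norm ((1/t) *\<^sub>R u))\<^sup>2 * \<bar>t\<bar>) = (norm u)\<^sup>2 / t^4"
      using t by (simp add: power_divide field_simps power2_eq_square power_eq_if abs_mult_self_eq)
    show "ennreal (\<bar>1/t\<bar> ^ 3) * (ennreal ((norm ((1/t) *\<^sub>R u))\<^sup>2) * indicator (cball 0 1 - {0}) ((1/t) *\<^sub>R u)
             * ennreal \<bar>t\<bar> * H (t *\<^sub>R ((1/t) *\<^sub>R u)))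
        = ennreal (if u \<noteq> 0 \<and> norm u \<le> \<bar>t\<bar> then (norm u)\<^sup>2 / t^4 else 0) * H u"
      using t unfolding ind by (auto simp: val[symmetric] ennreal_mult mult.assoc)
  qed
  finally show ?thesis .
qed

lemma nn_integral_sphere_line_cone:
  fixes H :: "vec3 \<Rightarrow> ennreal"
  assumes H[measurable]: "H \<in> borel_measurable borel"
  shows "(\<integral>\<^sup>+n. (\<integral>\<^sup>+s. ennreal \<bar>s\<bar> * H (s *\<^sub>R n) \<partial>lborel) \<partial>sphere_measure)
       = 3 * (\<integral>\<^sup>+y. (\<integral>\<^sup>+t. ennreal ((norm y)\<^sup>2) * indicator (cball 0 1 - {0}) y * ennreal \<bar>t\<bar> * H (t *\<^sub>R y)
                \<partial>lborel) \<partial>lborel)"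
proof -
  define B where "B = cball (0::vec3) 1 - {0}"
  have line: "(\<integral>\<^sup>+s. ennreal \<bar>s\<bar> * H (s *\<^sub>R (y /\<^sub>R norm y)) \<partial>lborel) * indicator B y
     = (\<integral>\<^sup>+t. ennreal ((norm y)\<^sup>2) * indicator B y * ennreal \<bar>t\<bar> * H (t *\<^sub>R y) \<partial>lborel)" for y
  proof (cases "y \<in> B")
    case True
    then have "y \<noteq> 0" by (simp add: B_def)
    then have "(\<integral>\<^sup>+s. ennreal \<bar>s\<bar> * H (s *\<^sub>R (y /\<^sub>R norm y)) \<partial>lborel) * indicator B y
        = ennreal ((norm y)\<^sup>2) * (\<integral>\<^sup>+t. ennreal \<bar>t\<bar> * H (t *\<^sub>R y) \<partial>lborel)"
      using True by (simp only: nn_integral_line_rescale[OF H \<open>y \<noteq> 0\<close>] indicator_simps mult_1_right)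
    then show ?thesis
      using True by (simp add: nn_integral_cmult mult.assoc)
  qed simp
  have "(\<integral>\<^sup>+n. (\<integral>\<^sup>+s. ennreal \<bar>s\<bar> * H (s *\<^sub>R n) \<partial>lborel) \<partial>sphere_measure)
     = 3 * (\<integral>\<^sup>+y. (\<integral>\<^sup>+s. ennreal \<bar>s\<bar> * H (s *\<^sub>R (y /\<^sub>R norm y)) \<partial>lborel) * indicator B y \<partial>lborel)"
    unfolding B_def by (rule nn_integral_sphere_measure) measurable
  also have "\<dots> = 3 * (\<integral>\<^sup>+y. (\<integral>\<^sup>+t. ennreal ((norm y)\<^sup>2) * indicator B y * ennreal \<bar>t\<bar> * H (t *\<^sub>R y)
                \<partial>lborel) \<partial>lborel)"
    unfolding line ..
  finally show ?thesis
    unfolding B_def .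
qed

lemma nn_integral_sphere_polar:
  fixes H :: "vec3 \<Rightarrow> ennreal"
  assumes H[measurable]: "H \<in> borel_measurable borel"
  shows "(\<integral>\<^sup>+n. (\<integral>\<^sup>+s. ennreal \<bar>s\<bar> * H (s *\<^sub>R n) \<partial>lborel) \<partial>sphere_measure)
       = 2 * (\<integral>\<^sup>+u. ennreal (1 / norm u) * H u \<partial>lborel)"
proof -
  define B where "B = cball (0::vec3) 1 - {0}"
  define K where "K t u = ennreal (if u \<noteq> 0 \<and> norm u \<le> \<bar>t\<bar> then (norm u)\<^sup>2 / t^4 else 0)"
    for t :: real and u :: vec3
  have ball: "(\<integral>\<^sup>+y. ennreal ((norm y)\<^sup>2) * indicator B y * ennreal \<bar>t\<bar> * H (t *\<^sub>R y) \<partial>lborel)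
      = (\<integral>\<^sup>+u. K t u * H u \<partial>lborel)" for t
    using nn_integral_punctured_ball_rescale[OF H, of t] by (cases "t = 0") (simp_all add: K_def B_def)
  have three_halves: "3 * ennreal (2 / (3 * r)) = 2 * ennreal (1 / r)" for r :: real
  proof -
    have "3 * ennreal (2 / (3 * r)) = ennreal (3 * (2 / (3 * r)))"
      by (subst ennreal_numeral[symmetric], subst ennreal_mult'[symmetric]) simp_all
    also have "\<dots> = 2 * ennreal (1 / r)"
      by (subst ennreal_numeral[symmetric], subst ennreal_mult'[symmetric]) simp_all
    finally show ?thesis .
  qed
  have "(\<integral>\<^sup>+n. (\<integral>\<^sup>+s. ennreal \<bar>s\<bar> * H (s *\<^sub>R n) \<partial>lborel) \<partial>sphere_measure)
     = 3 * (\<integral>\<^sup>+t. (\<integral>\<^sup>+y. ennreal ((norm y)\<^sup>2) * indicator B y * ennreal \<bar>t\<bar> * H (t *\<^sub>R y) \<partial>lborel) \<partial>lborel)"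
    unfolding nn_integral_sphere_line_cone[OF H] B_def by (subst lborel_pair.Fubini') simp_all
  also have "\<dots> = 3 * (\<integral>\<^sup>+u. (\<integral>\<^sup>+t. K t u \<partial>lborel) * H u \<partial>lborel)"
    unfolding ball by (subst lborel_pair.Fubini'[symmetric]) (simp_all add: K_def nn_integral_multc)
  also have "\<dots> = 2 * (\<integral>\<^sup>+u. ennreal (1 / norm u) * H u \<partial>lborel)"
    by (simp add: K_def nn_integral_radial_tail nn_integral_cmult[symmetric] mult.assoc[symmetric] three_halves)
  finally show ?thesis .
qed

section \<open>The collision kernel\<close>

lemma gamma_c_pos:
  assumes "m > 0" "m1 > 0" "0 < eps" "eps < 1"
  shows "gamma_c m m1 eps > 0"
  using assms by (simp add: gamma_c_def alpha_c_def beta_c_def)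

lemma mu_c_eq:
  assumes "m > 0" "m1 > 0" "0 < eps" "eps < 1"
  shows "mu_c m m1 eps = (2 * gammabar_c m m1 eps - 1) / gamma_c m m1 eps"
proof -
  define A where "A = alpha_c m m1 * (1 - beta_c eps)"
  have A: "A > 0" using assms by (simp add: A_def alpha_c_def beta_c_def)
  have b: "1 - 2 * beta_c eps = eps" "1 - beta_c eps = (1 + eps) / 2"
    by (simp_all add: beta_c_def field_simps)
  have g: "gamma_c m m1 eps = A / eps"
    unfolding A_def gamma_c_def b(1) ..
  have gb: "gammabar_c m m1 eps = ((1 + eps) / 2 - A) / eps"
    unfolding A_def gammabar_c_def b using assms by (simp add: field_simps)
  have mu: "mu_c m m1 eps = (1 - 2 * A) / A"
    unfolding A_def mu_c_def by (simp add: mult.assoc)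
  show ?thesis
    unfolding g gb mu using A assms by (simp add: field_simps)
qed

lemma gamma_c_gammabar_c:
  assumes "m > 0" "m1 > 0" "0 < eps" "eps < 1"
  shows "2 * gamma_c m m1 eps + 2 * gammabar_c m m1 eps - 1 = 1 / eps"
  using assms by (simp add: gamma_c_def gammabar_c_def beta_c_def field_simps)

lemma kern_nonneg: "m1 > 0 \<Longrightarrow> th1 > 0 \<Longrightarrow> 0 \<le> kern m m1 eps th1 u1 v v'"
  unfolding kern_def by simp

lemma borel_measurable_kern [measurable]: "kern m m1 eps th1 u1 v \<in> borel_measurable borel"
  unfolding kern_def[abs_def] by measurable

lemma kern_eq_Maxw1_marginal:
  fixes v v' u1 :: vec3
  assumes m1: "m1 > 0" and th1: "th1 > 0" and g: "g > 0" and mu: "mu_c m m1 eps = (2 * gb - 1) / g"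
  defines "u \<equiv> (1 / (2 * g)) *\<^sub>R v + (- 1 / (2 * g)) *\<^sub>R v'"
  shows "2 * \<bar>- 1 / (2 * g)\<bar> ^ 3 * (1 / norm u)
           * Maxw1_marginal m1 th1 (((v - u1) \<bullet> u + (2 * gb - 1) * (norm u)\<^sup>2) / norm u)
         = 1 / (2 * g\<^sup>2) * kern m m1 eps th1 u1 v v'"
  \<comment> \<open>for v = v' both sides are 0, because 1 / 0 = 0\<close>
proof (cases "v = v'")
  case False
  define w where "w = v - v'"
  define a where "a = v - u1"
  define D where "D = norm w"
  have D: "D > 0" using False by (simp add: D_def w_def)
  have u: "u = (1 / (2 * g)) *\<^sub>R w" by (simp add: u_def w_def algebra_simps)
  have nu: "norm u = D / (2 * g)" using g by (simp add: u D_def)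
  have au: "(v - u1) \<bullet> u = (a \<bullet> w) / (2 * g)" by (simp add: u a_def)
  have b2: "(norm (v' - u1))\<^sup>2 = (norm a)\<^sup>2 - 2 * (a \<bullet> w) + D\<^sup>2"
  proof -
    have "v' - u1 = a - w" by (simp add: a_def w_def)
    then show ?thesis unfolding D_def
      by (simp add: power2_norm_eq_inner inner_diff_left inner_diff_right inner_commute)
  qed
  define X where "X = ((v - u1) \<bullet> u + (2 * gb - 1) * (norm u)\<^sup>2) / norm u"
  define Y where "Y = (1 + mu_c m m1 eps) * norm (v - v')
                      + ((norm (v - u1))\<^sup>2 - (norm (v' - u1))\<^sup>2) / norm (v - v')"
  have XY: "X = Y / 2"
    unfolding X_def Y_def au nu b2 mu
    using D g by (simp add: a_def[symmetric] w_def[symmetric] D_def[symmetric] field_simps power2_eq_square)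
  have ex: "- (m1 * X\<^sup>2) / (2 * th1) = - (m1 / (8 * th1)) * Y\<^sup>2"
    unfolding XY using th1 by (simp add: field_simps power2_eq_square)
  have kk: "kern m m1 eps th1 u1 v v' = sqrt (m1 / (2 * pi * th1)) * (1 / D) * exp (- (m1 / (8 * th1)) * Y\<^sup>2)"
    by (simp add: kern_def Y_def D_def w_def)
  have "2 * \<bar>- 1 / (2 * g)\<bar> ^ 3 * (1 / norm u) * Maxw1_marginal m1 th1 X
      = 1 / (2 * g\<^sup>2) * kern m m1 eps th1 u1 v v'"
    unfolding Maxw1_marginal_eq[OF m1 th1] ex kk nu
    using D g by (simp add: field_simps power_eq_if)
  then show ?thesis
    unfolding X_def .
qed (simp add: u_def kern_def)

lemma nn_integral_polar_eq_kern:
  fixes G :: "vec3 \<Rightarrow> ennreal"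
  assumes m1: "m1 > 0" and th1: "th1 > 0" and g: "g > 0" and mu: "mu_c m m1 eps = (2 * gb - 1) / g"
    and [measurable]: "G \<in> borel_measurable borel"
  shows "2 * (\<integral>\<^sup>+u. ennreal (1 / norm u) * (G (v - (2 * g) *\<^sub>R u)
                * ennreal (Maxw1_marginal m1 th1 (((v - u1) \<bullet> u + (2 * gb - 1) * (norm u)\<^sup>2) / norm u))) \<partial>lborel)
       = ennreal (1 / (2 * g\<^sup>2)) * (\<integral>\<^sup>+v'. ennreal (kern m m1 eps th1 u1 v v') * G v' \<partial>lborel)"
    (is "2 * (\<integral>\<^sup>+u. ?F u \<partial>lborel) = _")
proof -
  let ?u = "\<lambda>v'. (1 / (2 * g)) *\<^sub>R v + (- 1 / (2 * g)) *\<^sub>R v'"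
  have [measurable]: "?F \<in> borel_measurable borel" by measurable
  have "2 * (\<integral>\<^sup>+u. ?F u \<partial>lborel) = (\<integral>\<^sup>+v'. 2 * (ennreal (\<bar>- 1 / (2 * g)\<bar> ^ 3) * ?F (?u v')) \<partial>lborel)"
    using g by (subst nn_integral_lborel_affine[where c = "- 1 / (2 * g)" and t = "(1 / (2 * g)) *\<^sub>R v"])
               (simp_all add: nn_integral_cmult)
  also have "\<dots> = (\<integral>\<^sup>+v'. ennreal (1 / (2 * g\<^sup>2)) * (ennreal (kern m m1 eps th1 u1 v v') * G v') \<partial>lborel)"
  proof (intro nn_integral_cong)
    fix v'
    define u where "u = ?u v'"
    have vu: "v - (2 * g) *\<^sub>R u = v'" using g by (simp add: u_def algebra_simps)
    have ennreal_prod: "2 * (ennreal a * (ennreal b * (G v' * ennreal c))) = ennreal (2 * a * b * c) * G v'"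
      if "0 \<le> a" "0 \<le> b" "0 \<le> c" for a b c :: real
      using that by (simp add: ennreal_mult mult_ac)
    have "2 * (ennreal (\<bar>- 1 / (2 * g)\<bar> ^ 3) * ?F (?u v'))
        = ennreal (2 * \<bar>- 1 / (2 * g)\<bar> ^ 3 * (1 / norm u)
            * Maxw1_marginal m1 th1 (((v - u1) \<bullet> u + (2 * gb - 1) * (norm u)\<^sup>2) / norm u)) * G v'"
      unfolding u_def[symmetric] vu by (rule ennreal_prod) simp_all
    also have "\<dots> = ennreal (1 / (2 * g\<^sup>2) * kern m m1 eps th1 u1 v v') * G v'"
      unfolding kern_eq_Maxw1_marginal[OF m1 th1 g mu, where v = v and v' = v', folded u_def] ..
    also have "\<dots> = ennreal (1 / (2 * g\<^sup>2)) * (ennreal (kern m m1 eps th1 u1 v v') * G v')"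
      by (simp only: ennreal_mult''[OF kern_nonneg[OF m1 th1]] mult.assoc)
    finally show "2 * (ennreal (\<bar>- 1 / (2 * g)\<bar> ^ 3) * ?F (?u v'))
        = ennreal (1 / (2 * g\<^sup>2)) * (ennreal (kern m m1 eps th1 u1 v v') * G v')" .
  qed
  finally show ?thesis
    by (simp add: nn_integral_cmult kern_def)
qed

section \<open>Kernel form of the gain operator\<close>

definition gain_weight :: "real \<Rightarrow> real \<Rightarrow> real \<Rightarrow> real \<Rightarrow> vec3 \<Rightarrow> vec3 \<Rightarrow> vec3 \<times> vec3 \<Rightarrow> real" where
  "gain_weight m m1 eps th1 u1 v p =
     \<bar>(v - fst p) \<bullet> snd p\<bar> * Maxw1 m1 th1 u1 (wstar m m1 eps v (fst p) (snd p))"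

lemma measurable_vstar [measurable (raw)]:
  fixes f g h :: "'a \<Rightarrow> vec3"
  assumes [measurable]: "f \<in> M \<rightarrow>\<^sub>M borel" "g \<in> M \<rightarrow>\<^sub>M borel" "h \<in> M \<rightarrow>\<^sub>M borel"
  shows "(\<lambda>x. vstar m m1 eps (f x) (g x) (h x)) \<in> M \<rightarrow>\<^sub>M borel"
  unfolding vstar_def by measurable

lemma measurable_gain_weight [measurable (raw)]:
  assumes [measurable]: "f \<in> M \<rightarrow>\<^sub>M borel" and g: "g \<in> M \<rightarrow>\<^sub>M lborel \<Otimes>\<^sub>M sphere_measure"
  shows "(\<lambda>x. gain_weight m m1 eps th1 u1 (f x) (g x)) \<in> borel_measurable M"
proof -
  have [measurable]: "(\<lambda>x. fst (g x)) \<in> borel_measurable M"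
    using measurable_compose[OF g measurable_fst] by (simp add: measurable_lborel2)
  have [measurable]: "(\<lambda>x. snd (g x)) \<in> borel_measurable M"
    using measurable_compose[OF g measurable_snd_sphere_measure] .
  show ?thesis
    unfolding gain_weight_def wstar_def by measurable
qed

lemma gain_weight_nonneg: "0 \<le> gain_weight m m1 eps th1 u1 v p"
  by (simp add: gain_weight_def)

lemma gain_integrand_eq:
  "gain_integrand m m1 eps th1 u1 f x v
     = (\<lambda>p. gain_weight m m1 eps th1 u1 v p * f (x, vstar m m1 eps v (fst p) (snd p)))"
  by (simp add: fun_eq_iff gain_integrand_def gain_weight_def mult_ac)

lemma nn_integral_gain_weight_direction:
  fixes g :: "vec3 \<Rightarrow> ennreal" and v n :: vec3
  assumes m1: "m1 > 0" and th1: "th1 > 0" and [measurable]: "g \<in> borel_measurable borel"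
    and n: "norm n = 1"
  shows "(\<integral>\<^sup>+w. ennreal (gain_weight m m1 eps th1 u1 v (w, n)) * g (vstar m m1 eps v w n) \<partial>lborel)
       = (\<integral>\<^sup>+s. ennreal \<bar>s\<bar> * g (v - (2 * gamma_c m m1 eps * s) *\<^sub>R n)
            * ennreal (Maxw1_marginal m1 th1 ((v - u1) \<bullet> n + (2 * gammabar_c m m1 eps - 1) * s)) \<partial>lborel)"
proof -
  define G where "G s = ennreal \<bar>s\<bar> * g (v - (2 * gamma_c m m1 eps * s) *\<^sub>R n)" for s
  have [measurable]: "G \<in> borel_measurable borel" unfolding G_def by measurable
  have "(\<integral>\<^sup>+w. ennreal (gain_weight m m1 eps th1 u1 v (w, n)) * g (vstar m m1 eps v w n) \<partial>lborel)
      = (\<integral>\<^sup>+q. ennreal (gain_weight m m1 eps th1 u1 v (v - q, n)) * g (vstar m m1 eps v (v - q) n) \<partial>lborel)"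
    by (subst nn_integral_lborel_affine[where c = "-1" and t = v])
       (simp_all add: gain_weight_def vstar_def wstar_def)
  also have "\<dots> = (\<integral>\<^sup>+q. G (q \<bullet> n)
      * ennreal (Maxw1 m1 th1 u1 (v - q + ((2 * gammabar_c m m1 eps) * (q \<bullet> n)) *\<^sub>R n)) \<partial>lborel)"
    by (intro nn_integral_cong) (simp add: gain_weight_def G_def vstar_def wstar_def ennreal_mult mult_ac)
  also have "\<dots> = (\<integral>\<^sup>+s. G s
      * ennreal (Maxw1_marginal m1 th1 ((v - u1) \<bullet> n + (2 * gammabar_c m m1 eps - 1) * s)) \<partial>lborel)"
    by (rule nn_integral_Maxw1_along_direction[OF m1 th1 n]) measurable
  finally show ?thesis
    unfolding G_def .
qed

lemma nn_integral_gain_weight_kern: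
  fixes g :: "vec3 \<Rightarrow> ennreal" and v :: vec3
  assumes "m > 0" and m1: "m1 > 0" and "0 < eps" "eps < 1" and th1: "th1 > 0"
    and g[measurable]: "g \<in> borel_measurable borel"
  shows "(\<integral>\<^sup>+p. ennreal (gain_weight m m1 eps th1 u1 v p) * g (vstar m m1 eps v (fst p) (snd p))
            \<partial>(lborel \<Otimes>\<^sub>M sphere_measure))
       = ennreal (1 / (2 * (gamma_c m m1 eps)\<^sup>2)) * (\<integral>\<^sup>+v'. ennreal (kern m m1 eps th1 u1 v v') * g v' \<partial>lborel)"
proof -
  define gm where "gm = gamma_c m m1 eps"
  define gb where "gb = gammabar_c m m1 eps"
  define H where "H u = g (v - (2 * gm) *\<^sub>R u)
    * ennreal (Maxw1_marginal m1 th1 (((v - u1) \<bullet> u + (2 * gb - 1) * (norm u)\<^sup>2) / norm u))" for u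
  have [measurable]: "H \<in> borel_measurable borel" unfolding H_def by measurable
  \<comment> \<open>the one-dimensional marginal is even, which absorbs the sign of s\<close>
  have line: "ennreal \<bar>s\<bar> * g (v - (2 * gm * s) *\<^sub>R n)
        * ennreal (Maxw1_marginal m1 th1 ((v - u1) \<bullet> n + (2 * gb - 1) * s))
      = ennreal \<bar>s\<bar> * H (s *\<^sub>R n)" if n: "norm n = 1" for n s
  proof (cases "s = 0")
    case False
    have "((v - u1) \<bullet> (s *\<^sub>R n) + (2 * gb - 1) * (norm (s *\<^sub>R n))\<^sup>2) / norm (s *\<^sub>R n)
        = sgn s * ((v - u1) \<bullet> n + (2 * gb - 1) * s)"
      using False n by (simp add: power2_eq_square field_simps sgn_if abs_if)
    moreover have "Maxw1_marginal m1 th1 (sgn s * t) = Maxw1_marginal m1 th1 t" for t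
      using False by (cases "s > 0") (auto simp: sgn_if Maxw1_marginal_minus)
    ultimately show ?thesis
      by (simp add: H_def mult.assoc)
  qed simp
  have "(\<integral>\<^sup>+p. ennreal (gain_weight m m1 eps th1 u1 v p) * g (vstar m m1 eps v (fst p) (snd p))
            \<partial>(lborel \<Otimes>\<^sub>M sphere_measure))
      = (\<integral>\<^sup>+n. (\<integral>\<^sup>+w. ennreal (gain_weight m m1 eps th1 u1 v (w, n)) * g (vstar m m1 eps v w n) \<partial>lborel)
            \<partial>sphere_measure)"
    by (subst lborel_sphere.nn_integral_snd[symmetric]) (simp_all add: gain_weight_def vstar_def wstar_def)
  also have "\<dots> = (\<integral>\<^sup>+n. (\<integral>\<^sup>+s. ennreal \<bar>s\<bar> * H (s *\<^sub>R n) \<partial>lborel) \<partial>sphere_measure)"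
    by (intro nn_integral_cong)
       (simp add: space_sphere_measure line
          nn_integral_gain_weight_direction[OF m1 th1 g, where m = m and eps = eps, folded gm_def gb_def])
  also have "\<dots> = 2 * (\<integral>\<^sup>+u. ennreal (1 / norm u) * H u \<partial>lborel)"
    by (rule nn_integral_sphere_polar) measurable
  also have "\<dots> = ennreal (1 / (2 * gm\<^sup>2)) * (\<integral>\<^sup>+v'. ennreal (kern m m1 eps th1 u1 v v') * g v' \<partial>lborel)"
    unfolding H_def using gamma_c_pos[OF assms(1-4)] mu_c_eq[OF assms(1-4)]
    by (intro nn_integral_polar_eq_kern) (simp_all add: m1 th1 gm_def gb_def)
  finally show ?thesis unfolding gm_def .
qed

section \<open>Weak form and collision frequency\<close>

lemma nn_integral_abs_mult_scale:
  fixes h :: "real \<Rightarrow> ennreal" and c :: real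
  assumes [measurable]: "h \<in> borel_measurable borel" and c: "c \<noteq> 0"
  shows "(\<integral>\<^sup>+s. ennreal \<bar>s\<bar> * h (c * s) \<partial>lborel) = ennreal (1 / c\<^sup>2) * (\<integral>\<^sup>+x. ennreal \<bar>x\<bar> * h x \<partial>lborel)"
proof -
  have "ennreal \<bar>0 + 1 / c * x\<bar> * h (c * (0 + 1 / c * x)) = ennreal \<bar>1 / c\<bar> * (ennreal \<bar>x\<bar> * h x)" for x
  proof -
    have "c * (0 + 1 / c * x) = x" using c by simp
    moreover have "ennreal \<bar>0 + 1 / c * x\<bar> = ennreal \<bar>1 / c\<bar> * ennreal \<bar>x\<bar>"
      by (subst ennreal_mult[symmetric]) (simp_all add: abs_mult)
    ultimately show ?thesis by (simp only: mult.assoc)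
  qed
  then have "(\<integral>\<^sup>+s. ennreal \<bar>s\<bar> * h (c * s) \<partial>lborel)
      = ennreal \<bar>1 / c\<bar> * (\<integral>\<^sup>+x. ennreal \<bar>1 / c\<bar> * (ennreal \<bar>x\<bar> * h x) \<partial>lborel)"
    using nn_integral_real_affine[of "\<lambda>s. ennreal \<bar>s\<bar> * h (c * s)" "1 / c" 0] c by simp
  also have "\<dots> = ennreal \<bar>1 / c\<bar> * ennreal \<bar>1 / c\<bar> * (\<integral>\<^sup>+x. ennreal \<bar>x\<bar> * h x \<partial>lborel)"
    by (subst nn_integral_cmult) (simp_all add: mult.assoc)
  also have "ennreal \<bar>1 / c\<bar> * ennreal \<bar>1 / c\<bar> = ennreal (1 / c\<^sup>2)"
    by (subst ennreal_mult[symmetric]) (simp_all add: power2_eq_square abs_mult_self_eq)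
  finally show ?thesis .
qed

lemma nn_integral_abs_Maxw1_direction:
  fixes v n :: vec3
  assumes m1: "m1 > 0" and th1: "th1 > 0" and n: "norm n = 1"
  shows "(\<integral>\<^sup>+w. ennreal (\<bar>(v - w) \<bullet> n\<bar> * Maxw1 m1 th1 u1 w) \<partial>lborel)
       = (\<integral>\<^sup>+s. ennreal \<bar>s\<bar> * ennreal (Maxw1_marginal m1 th1 ((v - u1) \<bullet> n - s)) \<partial>lborel)"
proof -
  have "(\<integral>\<^sup>+w. ennreal (\<bar>(v - w) \<bullet> n\<bar> * Maxw1 m1 th1 u1 w) \<partial>lborel)
      = (\<integral>\<^sup>+q. ennreal \<bar>q \<bullet> n\<bar> * ennreal (Maxw1 m1 th1 u1 (v - q + (0 * (q \<bullet> n)) *\<^sub>R n)) \<partial>lborel)"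
    by (subst nn_integral_lborel_affine[where c = "-1" and t = v]) (simp_all add: ennreal_mult)
  also have "\<dots> = (\<integral>\<^sup>+s. ennreal \<bar>s\<bar> * ennreal (Maxw1_marginal m1 th1 ((v - u1) \<bullet> n + (0 - 1) * s)) \<partial>lborel)"
    by (rule nn_integral_Maxw1_along_direction[OF m1 th1 n]) measurable
  finally show ?thesis by simp
qed

lemma nn_integral_gain_weight_direction_weak:
  fixes g :: "vec3 \<Rightarrow> ennreal" and n :: vec3
  assumes m: "m > 0" and m1: "m1 > 0" and e0: "0 < eps" and e1: "eps < 1" and th1: "th1 > 0"
    and g[measurable]: "g \<in> borel_measurable borel" and n: "norm n = 1"
  shows "(\<integral>\<^sup>+v. (\<integral>\<^sup>+w. ennreal (gain_weight m m1 eps th1 u1 v (w, n)) * g (vstar m m1 eps v w n) \<partial>lborel) \<partial>lborel)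
       = ennreal (eps\<^sup>2) * (\<integral>\<^sup>+v'. g v' * (\<integral>\<^sup>+w. ennreal (\<bar>(v' - w) \<bullet> n\<bar> * Maxw1 m1 th1 u1 w) \<partial>lborel) \<partial>lborel)"
proof -
  let ?\<phi> = "Maxw1_marginal m1 th1"
  define gm where "gm = gamma_c m m1 eps"
  define gb where "gb = gammabar_c m m1 eps"
  define F where "F v s = ennreal \<bar>s\<bar> * g (v - (2 * gm * s) *\<^sub>R n) * ennreal (?\<phi> ((v - u1) \<bullet> n + (2 * gb - 1) * s))"
    for v s
  have [measurable]: "case_prod F \<in> borel_measurable (lborel \<Otimes>\<^sub>M lborel)"
    unfolding F_def by measurable
  \<comment> \<open>translating v by 2 gm s n turns the coefficient of s into 2 gm + 2 gb - 1 = 1/eps\<close>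
  have shift: "(\<integral>\<^sup>+v. F v s \<partial>lborel) = (\<integral>\<^sup>+v. g v * (ennreal \<bar>s\<bar> * ennreal (?\<phi> ((v - u1) \<bullet> n + s / eps))) \<partial>lborel)"
    for s
  proof -
    have "F ((2 * gm * s) *\<^sub>R n + 1 *\<^sub>R v) s = g v * (ennreal \<bar>s\<bar> * ennreal (?\<phi> ((v - u1) \<bullet> n + s / eps)))"
      for v
    proof -
      have "n \<bullet> n = 1" using n by (simp add: norm_eq_sqrt_inner)
      then have "((2 * gm * s) *\<^sub>R n + 1 *\<^sub>R v - u1) \<bullet> n + (2 * gb - 1) * s
          = (v - u1) \<bullet> n + (2 * gm + 2 * gb - 1) * s"
        by (simp add: inner_add_left inner_diff_left algebra_simps)
      then show ?thesis
        unfolding gm_def gb_def gamma_c_gammabar_c[OF m m1 e0 e1] F_def by (simp add: mult_ac)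
    qed
    then show ?thesis
      by (subst nn_integral_lborel_affine[where c = 1 and t = "(2 * gm * s) *\<^sub>R n"]) simp_all
  qed
  have "(\<integral>\<^sup>+v. (\<integral>\<^sup>+w. ennreal (gain_weight m m1 eps th1 u1 v (w, n)) * g (vstar m m1 eps v w n) \<partial>lborel) \<partial>lborel)
      = (\<integral>\<^sup>+s. (\<integral>\<^sup>+v. F v s \<partial>lborel) \<partial>lborel)"
    unfolding nn_integral_gain_weight_direction[OF m1 th1 g n] F_def gm_def gb_def
    by (rule lborel_pair.Fubini'[symmetric]) (unfold F_def[symmetric] gm_def[symmetric] gb_def[symmetric], measurable)
  also have "\<dots> = (\<integral>\<^sup>+v. g v * (\<integral>\<^sup>+s. ennreal \<bar>s\<bar> * ennreal (?\<phi> ((v - u1) \<bullet> n + s / eps)) \<partial>lborel) \<partial>lborel)"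
    unfolding shift by (subst lborel_pair.Fubini') (simp_all add: nn_integral_cmult)
  also have "\<dots> = (\<integral>\<^sup>+v. g v * (ennreal (eps\<^sup>2)
      * (\<integral>\<^sup>+w. ennreal (\<bar>(v - w) \<bullet> n\<bar> * Maxw1 m1 th1 u1 w) \<partial>lborel)) \<partial>lborel)"
    using nn_integral_abs_mult_scale[of "\<lambda>x. ennreal (?\<phi> ((_ - u1) \<bullet> n - x))" "- 1 / eps"] e0
    by (simp add: nn_integral_abs_Maxw1_direction[OF m1 th1 n] power_divide)
  finally show ?thesis
    by (simp add: nn_integral_cmult[symmetric] mult_ac)
qed

lemma nn_integral_coll_freq_finite:
  assumes m1: "m1 > 0" and th1: "th1 > 0"
  shows "(\<integral>\<^sup>+p. ennreal (\<bar>(v - fst p) \<bullet> snd p\<bar> * Maxw1 m1 th1 u1 (fst p)) \<partial>(lborel \<Otimes>\<^sub>M sphere_measure)) < \<infinity>"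
proof -
  define K where "K = (\<integral>\<^sup>+t. ennreal \<bar>t\<bar> * ennreal (Maxw1_marginal m1 th1 t) \<partial>lborel)"
  have "(\<integral>\<^sup>+p. ennreal (\<bar>(v - fst p) \<bullet> snd p\<bar> * Maxw1 m1 th1 u1 (fst p)) \<partial>(lborel \<Otimes>\<^sub>M sphere_measure))
      = (\<integral>\<^sup>+n. (\<integral>\<^sup>+w. ennreal (\<bar>(v - w) \<bullet> n\<bar> * Maxw1 m1 th1 u1 w) \<partial>lborel) \<partial>sphere_measure)"
    by (subst lborel_sphere.nn_integral_snd[symmetric]) simp_all
  also have "\<dots> \<le> (\<integral>\<^sup>+n. ennreal (norm (v - u1)) + K \<partial>sphere_measure)"
  proof (rule nn_integral_mono)
    fix n assume "n \<in> space sphere_measure"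
    then have n: "norm n = 1" by (simp add: space_sphere_measure)
    have "\<bar>(v - u1) \<bullet> n\<bar> \<le> norm (v - u1)"
      using Cauchy_Schwarz_ineq2[of "v - u1" n] n by simp
    then have "ennreal \<bar>(v - u1) \<bullet> n\<bar> + K \<le> ennreal (norm (v - u1)) + K"
      by (intro add_right_mono ennreal_leI)
    then show "(\<integral>\<^sup>+w. ennreal (\<bar>(v - w) \<bullet> n\<bar> * Maxw1 m1 th1 u1 w) \<partial>lborel) \<le> ennreal (norm (v - u1)) + K"
      unfolding nn_integral_abs_Maxw1_direction[OF m1 th1 n] K_def
      by (rule order_trans[OF nn_integral_abs_Maxw1_marginal_shift_le[OF m1 th1]])
  qed
  also have "\<dots> < \<infinity>"
    using nn_integral_abs_Maxw1_marginal_finite[OF m1 th1] sphere.emeasure_finite[of "space sphere_measure"]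
    by (simp add: K_def ennreal_mult_eq_top_iff less_top[symmetric])
  finally show ?thesis .
qed

lemma ennreal_coll_freq:
  assumes m1: "m1 > 0" and th1: "th1 > 0"
  shows "ennreal (coll_freq m1 th1 u1 v)
       = (\<integral>\<^sup>+n. (\<integral>\<^sup>+w. ennreal (\<bar>(v - w) \<bullet> n\<bar> * Maxw1 m1 th1 u1 w) \<partial>lborel) \<partial>sphere_measure)"
proof -
  have "ennreal (coll_freq m1 th1 u1 v)
      = (\<integral>\<^sup>+p. ennreal (\<bar>(v - fst p) \<bullet> snd p\<bar> * Maxw1 m1 th1 u1 (fst p)) \<partial>(lborel \<Otimes>\<^sub>M sphere_measure))"
    unfolding coll_freq_def using nn_integral_coll_freq_finite[OF m1 th1, of v u1]
    by (intro nn_integral_eq_integral[symmetric]) (simp_all add: integrable_iff_bounded abs_mult)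
  then show ?thesis
    by (simp add: lborel_sphere.nn_integral_snd[symmetric])
qed

lemma borel_measurable_coll_freq [measurable]: "coll_freq m1 th1 u1 \<in> borel_measurable borel"
  unfolding coll_freq_def[abs_def] by measurable

lemma nn_integral_gain_weight_weak:
  fixes g :: "vec3 \<Rightarrow> ennreal"
  assumes m: "m > 0" and m1: "m1 > 0" and e0: "0 < eps" and e1: "eps < 1" and th1: "th1 > 0"
    and g[measurable]: "g \<in> borel_measurable borel"
  shows "(\<integral>\<^sup>+v. (\<integral>\<^sup>+p. ennreal (gain_weight m m1 eps th1 u1 v p) * g (vstar m m1 eps v (fst p) (snd p))
            \<partial>(lborel \<Otimes>\<^sub>M sphere_measure)) \<partial>lborel)
       = ennreal (eps\<^sup>2) * (\<integral>\<^sup>+v'. ennreal (coll_freq m1 th1 u1 v') * g v' \<partial>lborel)"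
proof -
  let ?J = "\<lambda>v' n. \<integral>\<^sup>+w. ennreal (\<bar>(v' - w) \<bullet> n\<bar> * Maxw1 m1 th1 u1 w) \<partial>lborel"
  have "(\<integral>\<^sup>+v. (\<integral>\<^sup>+p. ennreal (gain_weight m m1 eps th1 u1 v p) * g (vstar m m1 eps v (fst p) (snd p))
            \<partial>(lborel \<Otimes>\<^sub>M sphere_measure)) \<partial>lborel)
      = (\<integral>\<^sup>+v. (\<integral>\<^sup>+n. (\<integral>\<^sup>+w. ennreal (gain_weight m m1 eps th1 u1 v (w, n)) * g (vstar m m1 eps v w n)
            \<partial>lborel) \<partial>sphere_measure) \<partial>lborel)"
    by (intro nn_integral_cong, subst lborel_sphere.nn_integral_snd[symmetric])
       (simp_all add: gain_weight_def vstar_def wstar_def)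
  also have "\<dots> = (\<integral>\<^sup>+n. (\<integral>\<^sup>+v. (\<integral>\<^sup>+w. ennreal (gain_weight m m1 eps th1 u1 v (w, n)) * g (vstar m m1 eps v w n)
            \<partial>lborel) \<partial>lborel) \<partial>sphere_measure)"
    by (subst lborel_sphere.Fubini') (simp_all add: gain_weight_def vstar_def wstar_def)
  also have "\<dots> = (\<integral>\<^sup>+n. ennreal (eps\<^sup>2) * (\<integral>\<^sup>+v'. g v' * ?J v' n \<partial>lborel) \<partial>sphere_measure)"
    by (intro nn_integral_cong nn_integral_gain_weight_direction_weak[OF m m1 e0 e1 th1 g])
       (simp add: space_sphere_measure)
  also have "\<dots> = ennreal (eps\<^sup>2) * (\<integral>\<^sup>+n. (\<integral>\<^sup>+v'. g v' * ?J v' n \<partial>lborel) \<partial>sphere_measure)"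
    by (rule nn_integral_cmult) measurable
  also have "(\<integral>\<^sup>+n. (\<integral>\<^sup>+v'. g v' * ?J v' n \<partial>lborel) \<partial>sphere_measure)
      = (\<integral>\<^sup>+v'. (\<integral>\<^sup>+n. g v' * ?J v' n \<partial>sphere_measure) \<partial>lborel)"
    by (subst lborel_sphere.Fubini') simp_all
  also have "\<dots> = (\<integral>\<^sup>+v'. ennreal (coll_freq m1 th1 u1 v') * g v' \<partial>lborel)"
    by (simp add: ennreal_coll_freq[OF m1 th1] nn_integral_cmult mult.commute)
  finally show ?thesis .
qed

lemma nn_integral_pair_gain_weight_weak:
  fixes g :: "vec3 \<times> vec3 \<Rightarrow> ennreal"
  assumes "m > 0" "m1 > 0" "0 < eps" "eps < 1" "th1 > 0"
    and g[measurable]: "g \<in> borel_measurable (lborel \<Otimes>\<^sub>M lborel)"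
  shows "(\<integral>\<^sup>+z. (\<integral>\<^sup>+p. ennreal (gain_weight m m1 eps th1 u1 (snd z) p)
              * g (fst z, vstar m m1 eps (snd z) (fst p) (snd p)) \<partial>(lborel \<Otimes>\<^sub>M sphere_measure)) \<partial>(lborel \<Otimes>\<^sub>M lborel))
       = ennreal (eps\<^sup>2) * (\<integral>\<^sup>+z. ennreal (coll_freq m1 th1 u1 (snd z)) * g z \<partial>(lborel \<Otimes>\<^sub>M lborel))"
proof -
  have [measurable]: "(\<lambda>v. g (x, v)) \<in> borel_measurable borel" for x
    using measurable_Pair2[OF g, of x] by (simp only: measurable_lborel2 space_lborel space_borel UNIV_I)
  have "(\<integral>\<^sup>+z. (\<integral>\<^sup>+p. ennreal (gain_weight m m1 eps th1 u1 (snd z) p)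
              * g (fst z, vstar m m1 eps (snd z) (fst p) (snd p)) \<partial>(lborel \<Otimes>\<^sub>M sphere_measure)) \<partial>(lborel \<Otimes>\<^sub>M lborel))
      = (\<integral>\<^sup>+x. (\<integral>\<^sup>+v. (\<integral>\<^sup>+p. ennreal (gain_weight m m1 eps th1 u1 v p)
              * g (x, vstar m m1 eps v (fst p) (snd p)) \<partial>(lborel \<Otimes>\<^sub>M sphere_measure)) \<partial>lborel) \<partial>lborel)"
    by (subst lborel.nn_integral_fst[symmetric]) simp_all
  also have "\<dots> = (\<integral>\<^sup>+x. ennreal (eps\<^sup>2) * (\<integral>\<^sup>+v. ennreal (coll_freq m1 th1 u1 v) * g (x, v) \<partial>lborel) \<partial>lborel)"
    by (intro nn_integral_cong nn_integral_gain_weight_weak[OF assms(1-5)]) measurable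
  also have "\<dots> = ennreal (eps\<^sup>2) * (\<integral>\<^sup>+z. ennreal (coll_freq m1 th1 u1 (snd z)) * g z \<partial>(lborel \<Otimes>\<^sub>M lborel))"
    by (subst lborel.nn_integral_fst[symmetric]) (simp_all add: nn_integral_cmult)
  finally show ?thesis .
qed

lemma integral_weighted_transfer:
  fixes a :: "'a \<Rightarrow> real" and b :: "'b \<Rightarrow> real" and T :: "'a \<Rightarrow> 'b" and h :: "'b \<Rightarrow> real"
  assumes [measurable]: "a \<in> borel_measurable M" "b \<in> borel_measurable N" "T \<in> M \<rightarrow>\<^sub>M N"
      "h \<in> borel_measurable N"
    and a: "\<And>x. 0 \<le> a x" and b: "\<And>y. 0 \<le> b y" and c: "c > 0"
    and transfer: "\<And>g. g \<in> borel_measurable N \<Longrightarrow>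
      (\<integral>\<^sup>+x. ennreal (a x) * g (T x) \<partial>M) = ennreal c * (\<integral>\<^sup>+y. ennreal (b y) * g y \<partial>N)"
    and fin: "(\<integral>\<^sup>+x. ennreal (a x) * ennreal \<bar>h (T x)\<bar> \<partial>M) \<noteq> \<infinity>"
  shows "integrable M (\<lambda>x. a x * h (T x)) \<and> integrable N (\<lambda>y. b y * h y)
         \<and> (\<integral>x. a x * h (T x) \<partial>M) = c * (\<integral>y. b y * h y \<partial>N)"
proof (intro conjI)
  have split: "ennreal (a x * k) = ennreal (a x) * ennreal k" "ennreal (b y * k) = ennreal (b y) * ennreal k"
    for x y k
    using a b by (simp_all add: ennreal_mult')
  have T: "(\<integral>\<^sup>+x. ennreal (a x * k (T x)) \<partial>M) = ennreal c * (\<integral>\<^sup>+y. ennreal (b y * k y) \<partial>N)"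
    if [measurable]: "k \<in> borel_measurable N" for k
    unfolding split by (rule transfer) measurable
  show int_M: "integrable M (\<lambda>x. a x * h (T x))"
    using fin by (simp add: integrable_iff_bounded abs_mult a split less_top)
  have "ennreal c * (\<integral>\<^sup>+y. ennreal (b y * \<bar>h y\<bar>) \<partial>N) \<noteq> \<infinity>"
    using fin T[of "\<lambda>y. \<bar>h y\<bar>"] by (simp add: split)
  then show int_N: "integrable N (\<lambda>y. b y * h y)"
    using c by (simp add: integrable_iff_bounded abs_mult b ennreal_mult_eq_top_iff less_top)
  show "(\<integral>x. a x * h (T x) \<partial>M) = c * (\<integral>y. b y * h y \<partial>N)"
    using T[of h] T[of "\<lambda>y. - h y"] c
    by (simp add: real_lebesgue_integral_def[OF int_M] real_lebesgue_integral_def[OF int_N]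
                  enn2real_mult right_diff_distrib)
qed

lemma Qplus_eq_kern_integral:
  fixes f :: "vec3 \<times> vec3 \<Rightarrow> real"
  assumes m: "m > 0" and m1: "m1 > 0" and e0: "0 < eps" and e1: "eps < 1" and th1: "th1 > 0"
    and f[measurable]: "f \<in> borel_measurable (lborel \<Otimes>\<^sub>M lborel)"
    and fin: "(\<integral>\<^sup>+p. ennreal (gain_weight m m1 eps th1 u1 v p) * ennreal \<bar>f (x, vstar m m1 eps v (fst p) (snd p))\<bar>
                \<partial>(lborel \<Otimes>\<^sub>M sphere_measure)) \<noteq> \<infinity>"
  shows "integrable (lborel \<Otimes>\<^sub>M sphere_measure) (gain_integrand m m1 eps th1 u1 f x v)
         \<and> integrable lborel (\<lambda>v'. kern m m1 eps th1 u1 v v' * f (x, v'))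
         \<and> Qplus m m1 eps th1 u1 f x v
             = 1 / (2 * eps\<^sup>2 * (gamma_c m m1 eps)\<^sup>2) * (\<integral>v'. kern m m1 eps th1 u1 v v' * f (x, v') \<partial>lborel)"
proof -
  have [measurable]: "(\<lambda>v'. f (x, v')) \<in> borel_measurable borel"
    using measurable_Pair2[OF f, of x] by (simp only: measurable_lborel2 space_lborel space_borel UNIV_I)
  have "integrable (lborel \<Otimes>\<^sub>M sphere_measure) (\<lambda>p. gain_weight m m1 eps th1 u1 v p * f (x, vstar m m1 eps v (fst p) (snd p)))
      \<and> integrable lborel (\<lambda>v'. kern m m1 eps th1 u1 v v' * f (x, v'))
      \<and> (\<integral>p. gain_weight m m1 eps th1 u1 v p * f (x, vstar m m1 eps v (fst p) (snd p)) \<partial>(lborel \<Otimes>\<^sub>M sphere_measure))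
        = 1 / (2 * (gamma_c m m1 eps)\<^sup>2) * (\<integral>v'. kern m m1 eps th1 u1 v v' * f (x, v') \<partial>lborel)"
    using gamma_c_pos[OF m m1 e0 e1] fin
    by (intro integral_weighted_transfer[where h = "\<lambda>v'. f (x, v')"])
       (simp_all add: gain_weight_nonneg kern_nonneg[OF m1 th1] nn_integral_gain_weight_kern[OF assms(1-5)])
  then show ?thesis
    using e0 by (simp add: gain_integrand_eq Qplus_def powr_minus_divide powr_realpow)
qed

theorem theorem2p1:
  fixes m m1 eps th1 :: real and u1 :: vec3 and f :: "vec3 \<times> vec3 \<Rightarrow> real"
  assumes "m > 0" and "m1 > 0" and "0 < eps" and "eps < 1" and "th1 > 0"
    and "integrable (density (lborel \<Otimes>\<^sub>M lborel) (\<lambda>(x, v). ennreal (coll_freq m1 th1 u1 v))) f"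
  shows "AE (x, v) in (lborel \<Otimes>\<^sub>M lborel).
           integrable (lborel \<Otimes>\<^sub>M sphere_measure) (gain_integrand m m1 eps th1 u1 f x v)
         \<and> integrable lborel (\<lambda>v'. kern m m1 eps th1 u1 v v' * f (x, v'))
         \<and> Qplus m m1 eps th1 u1 f x v
             = 1 / (2 * eps\<^sup>2 * (gamma_c m m1 eps)\<^sup>2)
               * (\<integral>v'. kern m m1 eps th1 u1 v v' * f (x, v') \<partial>lborel)"
proof -
  note params = assms(1-5)
  have f[measurable]: "f \<in> borel_measurable (lborel \<Otimes>\<^sub>M lborel)"
    using borel_measurable_integrable[OF assms(6)] by simp
  have "(\<integral>\<^sup>+z. ennreal (coll_freq m1 th1 u1 (snd z)) * ennreal \<bar>f z\<bar> \<partial>(lborel \<Otimes>\<^sub>M lborel)) < \<infinity>"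
    using assms(6) by (simp add: integrable_iff_bounded nn_integral_density case_prod_beta)
  then have "AE z in lborel \<Otimes>\<^sub>M lborel.
      (\<integral>\<^sup>+p. ennreal (gain_weight m m1 eps th1 u1 (snd z) p)
              * ennreal \<bar>f (fst z, vstar m m1 eps (snd z) (fst p) (snd p))\<bar> \<partial>(lborel \<Otimes>\<^sub>M sphere_measure)) \<noteq> \<infinity>"
    by (intro nn_integral_PInf_AE)
       (simp_all add: nn_integral_pair_gain_weight_weak[OF params, where g = "\<lambda>z. ennreal \<bar>f z\<bar>"]
                      ennreal_mult_eq_top_iff less_top)
  then show ?thesis
    by (rule eventually_mono) (simp add: case_prod_beta Qplus_eq_kern_integral[OF params f])
qed

end
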